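(* Let $L$ be a library, $\Lambda$ a set of pairwise compatible libraries with $L\notin\Lambda$, and $I$ an implementation of $L$ that is well defined for $L$ using $\Lambda$. Let $\vec{p}=\langle p_1,\dots,p_T\rangle$ be a concurrent program all of whose method calls are to methods of libraries in $\Lambda\uplus\{L\}$. If $(\vec v,G)\in[\![\langle\!\langle \vec p\rangle\!\rangle_I]\!]$, then there exist a plain execution $G'$ and a function $f$ such that $(\vec v,G')\in[\![\vec p]\!]$ and $f$ is a wide abstraction of $G$ to $G'$ (with respect to $L$ and $I$).
   Context: Fix a set $\mathsf{Val}$ of values, a subset $\mathsf{Loc}\subseteq\mathsf{Val}$ of locations, a set $\mathsf{Method}$ of methods, a finite set of threads $\mathsf{Tid}=\{1,\dots,T\}$, and $\mathsf{EventId}=\mathbb N$. Programs. Sequential programs are given by the grammar $p::= v \mid m(v_1,\dots,v_k)\mid \mathtt{let}\ p\ \mathsf f\mid \mathtt{loop}\ p\mid \mathtt{break}_k\ v$, where $v,v_i\in\mathsf{Val}$, $m\in\mathsf{Method}$, $\mathsf f:\mathsf{Val}\to\mathsf{SeqProg}$, and $k\in\mathbb N^{+}$. A concurrent program is a tuple $\vec p=\langle p_1,\dots,p_T\rangle$ of sequential programs, $p_t$ run by thread $t$. Events and plain executions. Labels are $\mathsf{Lab}=\mathsf{Method}\times\mathsf{Val}^*\times\mathsf{Val}$ (method, inputs, output); events are $\mathsf{Event}=\mathsf{Tid}\times\mathsf{EventId}\times\mathsf{Lab}$; for $e=\langle t,\iota,l\rangle$, $\mathrm{thread}(e)=t$.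 A plain execution is a pair $\langle E,po\rangle$ with $E\subseteq\mathsf{Event}$, $po\subseteq E\times E$, $po=\bigcup_{t}po|_t$, where $po|_t$ (restriction to events of thread $t$) is a strict total order on the events of $t$. Write $\emptyset_G=\langle\emptyset,\emptyset\rangle$ and $\{e\}_G=\langle\{e\},\emptyset\rangle$. For $G_i=\langle E_i,po_i\rangle$ with $E_1\cap E_2=\emptyset$: $G_1;G_2=\langle E_1\cup E_2,\,po_1\cup po_2\cup(E_1\times E_2)\rangle$ and $G_1\parallel G_2=\langle E_1\cup E_2,\,po_1\cup po_2\rangle$. Plain semantics. $[\![p]\!]_t$ is a set of pairs $\langle\langle v,k\rangle,G\rangle$ (output value $v$, break number $k\in\mathbb N$, plain execution $G$): $[\![v]\!]_t=\{\langle\langle v,0\rangle,\emptyset_G\rangle\}$; $[\![\mathtt{break}_k\,v]\!]_t=\{\langle\langle v,k\rangle,\emptyset_G\rangle\}$; $[\![m(\vec v)]\!]_t=\{\langle\langle v',0\rangle,\{\langle t,\iota,\langle m,\vec v,v'\rangle\rangle\}_G\rangle : v'\in\mathsf{Val},\iota\in\mathsf{EventId}\}$; $[\![\mathtt{let}\ p\ \mathsf f]\!]_t=\{\langle r,G_1;G_2\rangle:\langle\langle v,0\rangle,G_1\rangle\in[\![p]\!]_t,\ \langle r,G_2\rangle\in[\![\mathsf f\,v]\!]_t\}\cup\{\langle\langle v,k\rangle,G_1\rangle\in[\![p]\!]_t: k\neq0\}$; $[\![\mathtt{loop}\ p]\!]_t=\bigcup_{j\in\mathbb N}\{\langle\langle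 v,k\rangle,G_0;\dots;G_j\rangle : (\forall i<j.\ \langle\langle\_,0\rangle,G_i\rangle\in[\![p]\!]_t)\wedge\langle\langle v,k+1\rangle,G_j\rangle\in[\![p]\!]_t\}$ (compositions taken only when event sets are disjoint). For concurrent programs, $[\![\langle p_1,\dots,p_T\rangle]\!]=\{\langle\langle v_1,\dots,v_T\rangle,\parallel_{t}G_t\rangle:\forall t.\ \langle\langle v_t,0\rangle,G_t\rangle\in[\![p_t]\!]_t\}$. Stamps and executions. Fix a set $\mathsf{Stamp}$ and a relation $to\subseteq\mathsf{Stamp}\times\mathsf{Stamp}$. An execution is $\langle E,po,stmp,so,hb\rangle$ where $\langle E,po\rangle$ is a plain execution, $stmp$ maps each event of $E$ to a nonempty set of stamps, inducing subevents $\mathsf{SEvent}=\{\langle e,a\rangle: e\in E, a\in stmp(e)\}$, and $so,hb\subseteq\mathsf{SEvent}\times\mathsf{SEvent}$. Its preserved program order is $ppo=\{\langle\langle e_1,a_1\rangle,\langle e_2,a_2\rangle\rangle:\langle e_1,e_2\rangle\in po,\ a_i\in stmp(e_i),\ \langle a_1,a_2\rangle\in to\}$. Libraries. A library is a triple $L=\langle M,\mathsf{loc},\mathcal C\rangle$: $M\subseteq\mathsf{Method}$; $\mathsf{loc}$ maps each event whose method lies in $M$ to a set of locations; $\mathcal C$ is a set of executions satisfying (monotonicity) if $\langle E,po,stmp,so,hb\rangle\in\mathcal C$ and $(ppo\cup so)^+\subseteq hb'\subseteq hb$ then $\langle E,po,stmp,so,hb'\rangle\in\mathcal C$, and (decomposability)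 if $\langle E_1\uplus E_2,po,stmp,so,hb\rangle\in\mathcal C$ and $\mathsf{loc}(E_1)\cap\mathsf{loc}(E_2)=\emptyset$ then its restriction to $E_1$ (restricting $po$, $stmp$, and $so,hb$ to subevents of events in $E_1$) is in $\mathcal C$. For a set $E$ of events, $E|_L$ is the set of events of $E$ whose method is in $L.M$. Two libraries are compatible if their method sets are disjoint. Implementations. An implementation of $L$ is a function $I:\mathsf{Tid}\times L.M\times\mathsf{Val}^*\to\mathsf{SeqProg}$. It is well defined for $L$ using $\Lambda$ if $L\notin\Lambda$ and for all $t,m,\vec v$: $I(t,m,\vec v)$ only calls methods of libraries in $\Lambda$; no element of $[\![I(t,m,\vec v)]\!]_t$ has the form $\langle\langle\_,k+1\rangle,\_\rangle$; and if $\langle\langle v,0\rangle,\langle E,po\rangle\rangle\in[\![I(t,m,\vec v)]\!]_t$ then $E\neq\emptyset$. The translation $\langle\!\langle\cdot\rangle\!\rangle$ replaces, in thread $t$, each call $m(\vec v)$ with $m\in L.M$ by $I(t,m,\vec v)$ and leaves everything else unchanged: $\langle\!\langle v\rangle\!\rangle_t=v$, $\langle\!\langle\mathtt{break}_k v\rangle\!\rangle_t=\mathtt{break}_k v$, $\langle\!\langle\mathtt{loop}\,p\rangle\!\rangle_t=\mathtt{loop}\,\langle\!\langle p\rangle\!\rangle_t$, $\langle\!\langle\mathtt{let}\,p\,\mathsf f\rangle\!\rangle_t=\mathtt{let}\,\langle\!\langle p\rangle\!\rangle_t\,(\lambda v.\langle\!\langle\mathsf f\,v\rangle\!\rangle_t)$,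 and $\langle\!\langle\langle p_1,\dots,p_T\rangle\rangle\!\rangle_I=\langle\langle\!\langle p_1\rangle\!\rangle_1,\dots,\langle\!\langle p_T\rangle\!\rangle_T\rangle$. Wide abstraction. For plain executions $G=\langle E,po\rangle$ (using methods of $\Lambda$) and $G'=\langle E',po'\rangle$ (using methods of $\Lambda\uplus\{L\}$), a function $f:E\to E'$ is a wide abstraction of $G$ to $G'$ if: $f$ is surjective; $E|_L=\emptyset$; for every $x\in E$, if $f(x)$ is not an event of $L$ then $f(x)=x$; $f(po)\subseteq(po')^*$ (where $f(r)=\{\langle f(x),f(y)\rangle:\langle x,y\rangle\in r\}$ and $^*$ is reflexive-transitive closure); for all $e_1,e_2\in E$, $\langle f(e_1),f(e_2)\rangle\in po'$ implies $\langle e_1,e_2\rangle\in po$; and for every $e'=\langle t,\iota,\langle m,\vec v,v'\rangle\rangle\in E'$ with $m\in L.M$, $\langle\langle v',0\rangle,G|_{f^{-1}(e')}\rangle\in[\![I(t,m,\vec v)]\!]_t$, where $G|_A=\langle A,po\cap(A\times A)\rangle$. *)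

theory Defs
  imports Main
begin

text \<open>Values 'v, methods 'm. Threads and event ids are naturals; Tid = {1..T}.\<close>

type_synonym ('v,'m) lab = "'m \<times> 'v list \<times> 'v"
type_synonym ('v,'m) event = "nat \<times> nat \<times> ('v,'m) lab"
type_synonym ('v,'m) pexec = "('v,'m) event set \<times> ('v,'m) event rel"

definition ev_thread :: "('v,'m) event \<Rightarrow> nat" where
  "ev_thread e = fst e"
definition ev_method :: "('v,'m) event \<Rightarrow> 'm" where
  "ev_method e = fst (snd (snd e))"
definition ev_inputs :: "('v,'m) event \<Rightarrow> 'v list" where
  "ev_inputs e = fst (snd (snd (snd e)))"
definition ev_output :: "('v,'m) event \<Rightarrow> 'v" where
  "ev_output e = snd (snd (snd (snd e)))"

definition thread_po :: "('v,'m) event rel \<Rightarrow> nat \<Rightarrow> ('v,'m) event rel" where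
  "thread_po po t = {(x,y) \<in> po. ev_thread x = t \<and> ev_thread y = t}"

definition plain_exec :: "nat \<Rightarrow> ('v,'m) pexec \<Rightarrow> bool" where
  "plain_exec T G \<longleftrightarrow>
     (\<forall>e \<in> fst G. ev_thread e \<in> {1..T}) \<and>
     snd G \<subseteq> fst G \<times> fst G \<and>
     snd G = (\<Union>t\<in>{1..T}. thread_po (snd G) t) \<and>
     (\<forall>t\<in>{1..T}. strict_linear_order_on {e \<in> fst G. ev_thread e = t} (thread_po (snd G) t))"

definition emptyG :: "('v,'m) pexec" where
  "emptyG = ({}, {})"

definition seqG :: "('v,'m) pexec \<Rightarrow> ('v,'m) pexec \<Rightarrow> ('v,'m) pexec" where
  "seqG G1 G2 = (fst G1 \<union> fst G2, snd G1 \<union> snd G2 \<union> (fst G1 \<times> fst G2))"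

definition parG :: "('v,'m) pexec \<Rightarrow> ('v,'m) pexec \<Rightarrow> ('v,'m) pexec" where
  "parG G1 G2 = (fst G1 \<union> fst G2, snd G1 \<union> snd G2)"

definition seq_list :: "('v,'m) pexec list \<Rightarrow> ('v,'m) pexec" where
  "seq_list Gs = foldr seqG Gs emptyG"

definition par_list :: "('v,'m) pexec list \<Rightarrow> ('v,'m) pexec" where
  "par_list Gs = foldr parG Gs emptyG"

definition disj_list :: "('v,'m) pexec list \<Rightarrow> bool" where
  "disj_list Gs \<longleftrightarrow> (\<forall>i<length Gs. \<forall>j<length Gs. i \<noteq> j \<longrightarrow> fst (Gs!i) \<inter> fst (Gs!j) = {})"

definition restrictG :: "('v,'m) pexec \<Rightarrow> ('v,'m) event set \<Rightarrow> ('v,'m) pexec" where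
  "restrictG G A = (A, snd G \<inter> (A \<times> A))"

datatype ('v,'m) prog =
    PVal 'v
  | PCall 'm "'v list"
  | PLet "('v,'m) prog" "'v \<Rightarrow> ('v,'m) prog"
  | PLoop "('v,'m) prog"
  | PBreak nat 'v

inductive valid_prog :: "('v,'m) prog \<Rightarrow> bool" where
  "valid_prog (PVal v)"
| "valid_prog (PCall m vs)"
| "valid_prog p \<Longrightarrow> (\<forall>v. valid_prog (f v)) \<Longrightarrow> valid_prog (PLet p f)"
| "valid_prog p \<Longrightarrow> valid_prog (PLoop p)"
| "k > 0 \<Longrightarrow> valid_prog (PBreak k v)"

inductive calls_only :: "'m set \<Rightarrow> ('v,'m) prog \<Rightarrow> bool" for Ms where
  "calls_only Ms (PVal v)"
| "m \<in> Ms \<Longrightarrow> calls_only Ms (PCall m vs)"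
| "calls_only Ms p \<Longrightarrow> (\<forall>v. calls_only Ms (f v)) \<Longrightarrow> calls_only Ms (PLet p f)"
| "calls_only Ms p \<Longrightarrow> calls_only Ms (PLoop p)"
| "calls_only Ms (PBreak k v)"

primrec sem :: "nat \<Rightarrow> ('v,'m) prog \<Rightarrow> (('v \<times> nat) \<times> ('v,'m) pexec) set" where
  "sem t (PVal v) = {((v,0), emptyG)}"
| "sem t (PBreak k v) = {((v,k), emptyG)}"
| "sem t (PCall m vs) = {((v',0), ({(t,\<iota>,(m,vs,v'))}, {})) | v' \<iota>. True}"
| "sem t (PLet p f) =
     {(r, seqG G1 G2) | v G1 r G2. ((v,0),G1) \<in> sem t p \<and> (r,G2) \<in> sem t (f v)
                                    \<and> fst G1 \<inter> fst G2 = {}}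
     \<union> {((v,k),G1) | v k G1. ((v,k),G1) \<in> sem t p \<and> k \<noteq> 0}"
| "sem t (PLoop p) =
     {((v,k), seq_list Gs) | v k Gs. Gs \<noteq> [] \<and> disj_list Gs
        \<and> (\<forall>i < length Gs - 1. \<exists>u. ((u,0), Gs!i) \<in> sem t p)
        \<and> ((v, Suc k), last Gs) \<in> sem t p}"

text \<open>Concurrent programs: lists of length T; entry i is run by thread i+1.\<close>
definition conc_sem :: "('v,'m) prog list \<Rightarrow> ('v list \<times> ('v,'m) pexec) set" where
  "conc_sem ps = {(vs, par_list Gs) | vs Gs. length vs = length ps \<and> length Gs = length ps
       \<and> disj_list Gs \<and> (\<forall>i<length ps. ((vs!i, 0), Gs!i) \<in> sem (Suc i) (ps!i))}"

type_synonym ('v,'m,'s) sevent = "('v,'m) event \<times> 's"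
type_synonym ('v,'m,'s) execution =
  "('v,'m) event set \<times> ('v,'m) event rel \<times> (('v,'m) event \<Rightarrow> 's set)
     \<times> ('v,'m,'s) sevent rel \<times> ('v,'m,'s) sevent rel"

definition sevents :: "('v,'m) event set \<Rightarrow> (('v,'m) event \<Rightarrow> 's set) \<Rightarrow> ('v,'m,'s) sevent set" where
  "sevents E stmp = {(e,a). e \<in> E \<and> a \<in> stmp e}"

definition ppo :: "('s \<times> 's) set \<Rightarrow> ('v,'m) event rel \<Rightarrow> (('v,'m) event \<Rightarrow> 's set) \<Rightarrow> ('v,'m,'s) sevent rel" where
  "ppo to po stmp = {((e1,a1),(e2,a2)). (e1,e2) \<in> po \<and> a1 \<in> stmp e1 \<and> a2 \<in> stmp e2 \<and> (a1,a2) \<in> to}"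

text \<open>stmp is a function on E (represented as returning the empty set outside E).\<close>
definition is_execution :: "nat \<Rightarrow> ('v,'m,'s) execution \<Rightarrow> bool" where
  "is_execution T X \<longleftrightarrow> (case X of (E,po,stmp,so,hb) \<Rightarrow>
      plain_exec T (E,po) \<and> (\<forall>e\<in>E. stmp e \<noteq> {}) \<and> (\<forall>e. e \<notin> E \<longrightarrow> stmp e = {})
      \<and> so \<subseteq> sevents E stmp \<times> sevents E stmp \<and> hb \<subseteq> sevents E stmp \<times> sevents E stmp)"

definition restrict_exec :: "('v,'m,'s) execution \<Rightarrow> ('v,'m) event set \<Rightarrow> ('v,'m,'s) execution" where
  "restrict_exec X A = (case X of (E,po,stmp,so,hb) \<Rightarrow>
      (A, po \<inter> (A \<times> A), (\<lambda>e. if e \<in> A then stmp e else {}),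
       so \<inter> (sevents A stmp \<times> sevents A stmp), hb \<inter> (sevents A stmp \<times> sevents A stmp)))"

record ('v,'m,'s) library =
  lib_M :: "'m set"
  lib_loc :: "('v,'m) event \<Rightarrow> 'v set"
  lib_C :: "('v,'m,'s) execution set"

definition is_library :: "nat \<Rightarrow> 'v set \<Rightarrow> ('s \<times> 's) set \<Rightarrow> ('v,'m,'s) library \<Rightarrow> bool" where
  "is_library T Loc to L \<longleftrightarrow>
     (\<forall>e. ev_method e \<in> lib_M L \<longrightarrow> lib_loc L e \<subseteq> Loc) \<and>
     (\<forall>X \<in> lib_C L. is_execution T X) \<and>
     (\<forall>E po stmp so hb hb'. (E,po,stmp,so,hb) \<in> lib_C L \<longrightarrow>
          (ppo to po stmp \<union> so)\<^sup>+ \<subseteq> hb' \<longrightarrow> hb' \<subseteq> hb \<longrightarrow> (E,po,stmp,so,hb') \<in> lib_C L) \<and>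
     (\<forall>E1 E2 po stmp so hb. (E1 \<union> E2,po,stmp,so,hb) \<in> lib_C L \<longrightarrow> E1 \<inter> E2 = {} \<longrightarrow>
          (\<Union>(lib_loc L ` E1)) \<inter> (\<Union>(lib_loc L ` E2)) = {} \<longrightarrow>
          restrict_exec (E1 \<union> E2,po,stmp,so,hb) E1 \<in> lib_C L)"

definition compatible :: "('v,'m,'s) library \<Rightarrow> ('v,'m,'s) library \<Rightarrow> bool" where
  "compatible L1 L2 \<longleftrightarrow> lib_M L1 \<inter> lib_M L2 = {}"

definition lib_methods :: "('v,'m,'s) library set \<Rightarrow> 'm set" where
  "lib_methods \<Lambda> = (\<Union>L\<in>\<Lambda>. lib_M L)"

type_synonym ('v,'m) impl = "nat \<Rightarrow> 'm \<Rightarrow> 'v list \<Rightarrow> ('v,'m) prog"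

definition impl_well_defined ::
  "nat \<Rightarrow> ('v,'m) impl \<Rightarrow> ('v,'m,'s) library \<Rightarrow> ('v,'m,'s) library set \<Rightarrow> bool" where
  "impl_well_defined T I L \<Lambda> \<longleftrightarrow> L \<notin> \<Lambda> \<and>
     (\<forall>t\<in>{1..T}. \<forall>m\<in>lib_M L. \<forall>vs.
        valid_prog (I t m vs) \<and>
        calls_only (lib_methods \<Lambda>) (I t m vs) \<and>
        (\<forall>v k G. ((v, Suc k), G) \<notin> sem t (I t m vs)) \<and>
        (\<forall>v G. ((v, 0), G) \<in> sem t (I t m vs) \<longrightarrow> fst G \<noteq> {}))"

primrec translate :: "('v,'m) impl \<Rightarrow> 'm set \<Rightarrow> nat \<Rightarrow> ('v,'m) prog \<Rightarrow> ('v,'m) prog" where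
  "translate I Ms t (PVal v) = PVal v"
| "translate I Ms t (PBreak k v) = PBreak k v"
| "translate I Ms t (PCall m vs) = (if m \<in> Ms then I t m vs else PCall m vs)"
| "translate I Ms t (PLoop p) = PLoop (translate I Ms t p)"
| "translate I Ms t (PLet p f) = PLet (translate I Ms t p) (\<lambda>v. translate I Ms t (f v))"

definition translate_conc :: "('v,'m) impl \<Rightarrow> 'm set \<Rightarrow> ('v,'m) prog list \<Rightarrow> ('v,'m) prog list" where
  "translate_conc I Ms ps = map (\<lambda>i. translate I Ms (Suc i) (ps!i)) [0..<length ps]"

definition wide_abstraction ::
  "('v,'m,'s) library \<Rightarrow> ('v,'m) impl \<Rightarrow> (('v,'m) event \<Rightarrow> ('v,'m) event)
     \<Rightarrow> ('v,'m) pexec \<Rightarrow> ('v,'m) pexec \<Rightarrow> bool" where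
  "wide_abstraction L I f G G' \<longleftrightarrow>
     f ` fst G = fst G' \<and>
     (\<forall>e\<in>fst G. ev_method e \<notin> lib_M L) \<and>
     (\<forall>x\<in>fst G. ev_method (f x) \<notin> lib_M L \<longrightarrow> f x = x) \<and>
     (\<forall>(x,y)\<in>snd G. (f x, f y) \<in> (snd G')\<^sup>*) \<and>
     (\<forall>e1\<in>fst G. \<forall>e2\<in>fst G. (f e1, f e2) \<in> snd G' \<longrightarrow> (e1,e2) \<in> snd G) \<and>
     (\<forall>e'\<in>fst G'. ev_method e' \<in> lib_M L \<longrightarrow>
        ((ev_output e', 0), restrictG G {x \<in> fst G. f x = e'})
          \<in> sem (ev_thread e') (I (ev_thread e') (ev_method e') (ev_inputs e')))"

end

theory Submission
  imports Defs
begin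

text \<open>
  A call of a method of L is abstracted to a
  single event whose preimage is the run of its implementation; let and loop glue the abstractions
  of their parts together, and so does parallel composition of the threads. Gluing needs the
  abstractions of disjoint executions to be disjoint. This is achieved by fixing an injective
  numbering h of the finitely many concrete events and giving each abstract event of L the
  identifier h y of one of the events y implementing it.
\<close>

definition combG :: "bool \<Rightarrow> ('v,'m) pexec \<Rightarrow> ('v,'m) pexec \<Rightarrow> ('v,'m) pexec" where
  "combG b G1 G2 = (fst G1 \<union> fst G2, snd G1 \<union> snd G2 \<union> (if b then fst G1 \<times> fst G2 else {}))"

lemma seqG_eq_combG: "seqG = combG True"
  by (auto simp: fun_eq_iff seqG_def combG_def)

lemma parG_eq_combG: "parG = combG False"
  by (auto simp: fun_eq_iff parG_def combG_def)

lemma fst_foldr_combG: "fst (foldr (combG b) Gs emptyG) = (\<Union>G\<in>set Gs. fst G)"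
  by (induction Gs) (auto simp: combG_def emptyG_def)

lemma fst_seq_list: "fst (seq_list Gs) = (\<Union>G\<in>set Gs. fst G)"
  by (simp add: seq_list_def seqG_eq_combG fst_foldr_combG)

lemma fst_par_list: "fst (par_list Gs) = (\<Union>G\<in>set Gs. fst G)"
  by (simp add: par_list_def parG_eq_combG fst_foldr_combG)

lemma restrictG_combG_left:
  assumes "A \<subseteq> fst G1" and "snd G2 \<subseteq> fst G2 \<times> fst G2" and "fst G1 \<inter> fst G2 = {}"
  shows "restrictG (combG b G1 G2) A = restrictG G1 A"
  using assms by (auto simp: restrictG_def combG_def)

lemma restrictG_combG_right:
  assumes "A \<subseteq> fst G2" and "snd G1 \<subseteq> fst G1 \<times> fst G1" and "fst G1 \<inter> fst G2 = {}"
  shows "restrictG (combG b G1 G2) A = restrictG G2 A"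
  using assms by (auto simp: restrictG_def combG_def)

definition wf_pexec :: "('v,'m) pexec \<Rightarrow> bool" where
  "wf_pexec G \<longleftrightarrow> finite (fst G) \<and> snd G \<subseteq> fst G \<times> fst G"

lemma wf_pexec_emptyG: "wf_pexec emptyG"
  by (simp add: wf_pexec_def emptyG_def)

lemma wf_pexec_combG: "wf_pexec G1 \<Longrightarrow> wf_pexec G2 \<Longrightarrow> wf_pexec (combG b G1 G2)"
  by (auto simp: combG_def wf_pexec_def)

lemma wf_pexec_foldr_combG: "\<forall>G\<in>set Gs. wf_pexec G \<Longrightarrow> wf_pexec (foldr (combG b) Gs emptyG)"
  by (induction Gs) (simp_all add: wf_pexec_emptyG wf_pexec_combG)

lemma disj_list_Cons [simp]:
  "disj_list (G # Gs) \<longleftrightarrow> disj_list Gs \<and> (\<forall>G'\<in>set Gs. fst G \<inter> fst G' = {})"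
  unfolding disj_list_def by (simp add: All_less_Suc2 all_set_conv_all_nth Int_commute) blast

lemma sem_PLoop_iterations:
  assumes "(r, G) \<in> sem t (PLoop p)"
  obtains Gs where "G = seq_list Gs" and "\<forall>Gi\<in>set Gs. \<exists>ri. (ri, Gi) \<in> sem t p"
proof -
  from assms obtain v k Gs where G: "G = seq_list Gs" and "Gs \<noteq> []"
    and "\<forall>i < length Gs - 1. \<exists>u. ((u,0), Gs!i) \<in> sem t p" and "((v, Suc k), last Gs) \<in> sem t p"
    by auto
  then have "\<forall>i<length Gs. \<exists>ri. (ri, Gs!i) \<in> sem t p"
    by (metis last_conv_nth less_Suc_eq Suc_pred' length_greater_0_conv diff_Suc_1)
  then show ?thesis using that G by (metis in_set_conv_nth)
qed

lemma sem_PLetE: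
  assumes "(r, G) \<in> sem t (PLet p f)"
  obtains (seq) v G1 G2 where "((v,0), G1) \<in> sem t p" "(r, G2) \<in> sem t (f v)"
      "G = seqG G1 G2" "fst G1 \<inter> fst G2 = {}"
    | (break) "(r, G) \<in> sem t p" "snd r \<noteq> 0"
  using assms by auto

lemma sem_PLet_seqI:
  assumes "((v,0), G1) \<in> sem t p" and "(r, G2) \<in> sem t (f v)" and "fst G1 \<inter> fst G2 = {}"
  shows "(r, seqG G1 G2) \<in> sem t (PLet p f)"
  using assms unfolding sem.simps by blast

lemma sem_PLet_breakI: "(r, G) \<in> sem t p \<Longrightarrow> snd r \<noteq> 0 \<Longrightarrow> (r, G) \<in> sem t (PLet p f)"
  by (cases r; cases G) simp

lemma sem_PLoopI:
  assumes "Gs \<noteq> []" and "disj_list Gs" and "\<forall>i < length Gs - 1. \<exists>u. ((u, 0), Gs!i) \<in> sem t p"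
    and "((v, Suc k), last Gs) \<in> sem t p"
  shows "((v, k), seq_list Gs) \<in> sem t (PLoop p)"
  using assms unfolding sem.simps by blast

lemma sem_wf_pexec: "(r, G) \<in> sem t p \<Longrightarrow> wf_pexec G"
proof (induction p arbitrary: r G)
  case (PLet p f)
  from PLet.prems show ?case
  proof (cases rule: sem_PLetE)
    case (seq v G1 G2)
    then show ?thesis using PLet.IH(1)[OF seq(1)] PLet.IH(2)[OF _ seq(2)]
      by (simp add: seqG_eq_combG wf_pexec_combG)
  qed (rule PLet.IH(1))
next
  case (PLoop p)
  then obtain Gs where "G = seq_list Gs" "\<forall>Gi\<in>set Gs. wf_pexec Gi"
    by (metis sem_PLoop_iterations)
  then show ?case by (simp add: seq_list_def seqG_eq_combG wf_pexec_foldr_combG)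
qed (auto simp: wf_pexec_def emptyG_def)

lemma sem_calls_only_methods: "(r, G) \<in> sem t p \<Longrightarrow> calls_only Ms p \<Longrightarrow> ev_method ` fst G \<subseteq> Ms"
proof (induction p arbitrary: r G)
  case (PCall m vs)
  then show ?case by (auto simp: ev_method_def elim: calls_only.cases)
next
  case (PLet p f)
  have p: "calls_only Ms p" and f: "\<And>v. calls_only Ms (f v)"
    using PLet.prems(2) by (auto elim: calls_only.cases)
  from PLet.prems(1) show ?case
  proof (cases rule: sem_PLetE)
    case (seq v G1 G2)
    then show ?thesis using PLet.IH(1)[OF seq(1) p] PLet.IH(2)[OF _ seq(2) f] by (auto simp: seqG_def)
  next
    case break
    then show ?thesis using PLet.IH(1) p by blast
  qed
next
  case (PLoop p)
  have "calls_only Ms p" using PLoop.prems(2) by (auto elim: calls_only.cases)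
  moreover obtain Gs where "G = seq_list Gs" "\<forall>Gi\<in>set Gs. \<exists>ri. (ri, Gi) \<in> sem t p"
    using PLoop.prems(1) by (rule sem_PLoop_iterations)
  ultimately show ?case using PLoop.IH by (fastforce simp: fst_seq_list)
qed (auto simp: emptyG_def)

definition tagged_abstraction ::
  "('v,'m,'s) library \<Rightarrow> ('v,'m) impl \<Rightarrow> (('v,'m) event \<Rightarrow> nat) \<Rightarrow> (('v,'m) event \<Rightarrow> ('v,'m) event)
     \<Rightarrow> ('v,'m) pexec \<Rightarrow> ('v,'m) pexec \<Rightarrow> bool" where
  "tagged_abstraction L I h f G G' \<longleftrightarrow>
     wf_pexec G \<and> wf_pexec G' \<and> wide_abstraction L I f G G' \<and>
     (\<forall>x\<in>fst G. ev_method (f x) \<in> lib_M L \<longrightarrow> (\<exists>y\<in>fst G. f y = f x \<and> fst (snd (f x)) = h y))"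

lemma tagged_abstraction_emptyG: "tagged_abstraction L I h f emptyG emptyG"
  by (simp add: tagged_abstraction_def wide_abstraction_def wf_pexec_def emptyG_def)

lemma tagged_abstractionD:
  assumes "tagged_abstraction L I h f G G'"
  shows "wf_pexec G" and "wf_pexec G'" and "f ` fst G = fst G'"
    and "\<And>e. e \<in> fst G \<Longrightarrow> ev_method e \<notin> lib_M L"
    and "\<And>x. x \<in> fst G \<Longrightarrow> ev_method (f x) \<notin> lib_M L \<Longrightarrow> f x = x"
    and "\<And>x. x \<in> fst G \<Longrightarrow> ev_method (f x) \<in> lib_M L \<Longrightarrow> \<exists>y\<in>fst G. f y = f x \<and> fst (snd (f x)) = h y"
    and "\<And>x y. (x, y) \<in> snd G \<Longrightarrow> (f x, f y) \<in> (snd G')\<^sup>*"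
    and "\<And>x y. x \<in> fst G \<Longrightarrow> y \<in> fst G \<Longrightarrow> (f x, f y) \<in> snd G' \<Longrightarrow> (x, y) \<in> snd G"
    and "\<And>e'. e' \<in> fst G' \<Longrightarrow> ev_method e' \<in> lib_M L \<Longrightarrow>
           ((ev_output e', 0), restrictG G {x \<in> fst G. f x = e'})
             \<in> sem (ev_thread e') (I (ev_thread e') (ev_method e') (ev_inputs e'))"
  using assms by (auto simp: tagged_abstraction_def wide_abstraction_def)

lemma tagged_abstraction_disjoint:
  assumes A1: "tagged_abstraction L I h f1 G1 G1'" and A2: "tagged_abstraction L I h f2 G2 G2'"
    and "fst G1 \<inter> fst G2 = {}" and "inj_on h (fst G1 \<union> fst G2)"
  shows "fst G1' \<inter> fst G2' = {}"
proof (rule ccontr)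
  assume "fst G1' \<inter> fst G2' \<noteq> {}"
  then obtain e where "e \<in> f1 ` fst G1" and "e \<in> f2 ` fst G2"
    using tagged_abstractionD(3)[OF A1] tagged_abstractionD(3)[OF A2] by blast
  then obtain x1 x2 where x1: "x1 \<in> fst G1" "f1 x1 = e" and x2: "x2 \<in> fst G2" "f2 x2 = e"
    by (elim imageE) simp
  show False
  proof (cases "ev_method e \<in> lib_M L")
    case True
    then obtain y1 y2 where "y1 \<in> fst G1" "y2 \<in> fst G2" "h y1 = h y2"
      using tagged_abstractionD(6)[OF A1 x1(1)] tagged_abstractionD(6)[OF A2 x2(1)] x1(2) x2(2) by metis
    then show False using assms(3,4) by (auto dest: inj_onD)
  next
    case False
    then have "x1 = x2"
      using tagged_abstractionD(5)[OF A1 x1(1)] tagged_abstractionD(5)[OF A2 x2(1)] x1(2) x2(2) by simp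
    then show False using assms(3) x1 x2 by blast
  qed
qed

context
  fixes L :: "('v,'m,'s) library" and I :: "('v,'m) impl" and h :: "('v,'m) event \<Rightarrow> nat"
    and f1 f2 :: "('v,'m) event \<Rightarrow> ('v,'m) event" and G1 G1' G2 G2' :: "('v,'m) pexec"
  assumes A1: "tagged_abstraction L I h f1 G1 G1'" and A2: "tagged_abstraction L I h f2 G2 G2'"
    and disjoint: "fst G1 \<inter> fst G2 = {}" and inj: "inj_on h (fst G1 \<union> fst G2)"
begin

lemma tagged_abstraction_combG_side:
  assumes "x \<in> fst G1 \<union> fst G2"
  shows "override_on f2 f1 (fst G1) x \<in> fst G1' \<longleftrightarrow> x \<in> fst G1"
    and "override_on f2 f1 (fst G1) x \<in> fst G2' \<longleftrightarrow> x \<in> fst G2"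
proof -
  have "fst G1' \<inter> fst G2' = {}" by (rule tagged_abstraction_disjoint[OF A1 A2 disjoint inj])
  moreover have "f1 x \<in> fst G1'" if "x \<in> fst G1" using that tagged_abstractionD(3)[OF A1] by blast
  moreover have "f2 x \<in> fst G2'" if "x \<in> fst G2" using that tagged_abstractionD(3)[OF A2] by blast
  ultimately show "override_on f2 f1 (fst G1) x \<in> fst G1' \<longleftrightarrow> x \<in> fst G1"
    and "override_on f2 f1 (fst G1) x \<in> fst G2' \<longleftrightarrow> x \<in> fst G2"
    using assms disjoint by (cases "x \<in> fst G1"; auto)+
qed

lemma tagged_abstraction_combG_po:
  assumes "(x, y) \<in> snd (combG b G1 G2)"
  shows "(override_on f2 f1 (fst G1) x, override_on f2 f1 (fst G1) y) \<in> (snd (combG b G1' G2'))\<^sup>*"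
proof -
  let ?F = "override_on f2 f1 (fst G1)"
  have wf: "snd G1 \<subseteq> fst G1 \<times> fst G1" "snd G2 \<subseteq> fst G2 \<times> fst G2"
    using tagged_abstractionD(1)[OF A1] tagged_abstractionD(1)[OF A2] by (simp_all add: wf_pexec_def)
  consider "(x, y) \<in> snd G1" | "(x, y) \<in> snd G2" | "b" "x \<in> fst G1" "y \<in> fst G2"
    using assms by (auto simp: combG_def split: if_splits)
  then show ?thesis
  proof cases
    case 1
    then have "x \<in> fst G1" "y \<in> fst G1" using wf(1) by blast+
    then have "(?F x, ?F y) \<in> (snd G1')\<^sup>*" using tagged_abstractionD(7)[OF A1 1] by simp
    then show ?thesis by (rule rtrancl_mono[THEN subsetD, rotated]) (auto simp: combG_def)
  next
    case 2
    then have "x \<in> fst G2" "y \<in> fst G2" using wf(2) disjoint by blast+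
    moreover have "x \<notin> fst G1" "y \<notin> fst G1" using calculation disjoint by blast+
    ultimately have "(?F x, ?F y) \<in> (snd G2')\<^sup>*" using tagged_abstractionD(7)[OF A2 2] by simp
    then show ?thesis by (rule rtrancl_mono[THEN subsetD, rotated]) (auto simp: combG_def)
  next
    case 3
    then have "?F x \<in> fst G1'" "?F y \<in> fst G2'"
      using tagged_abstraction_combG_side(1)[of x] tagged_abstraction_combG_side(2)[of y]
      by blast+
    then show ?thesis using 3 by (auto simp: combG_def)
  qed
qed

lemma tagged_abstraction_combG_po_reflect:
  assumes "x \<in> fst (combG b G1 G2)" and "y \<in> fst (combG b G1 G2)"
    and "(override_on f2 f1 (fst G1) x, override_on f2 f1 (fst G1) y) \<in> snd (combG b G1' G2')"
  shows "(x, y) \<in> snd (combG b G1 G2)"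
proof -
  let ?F = "override_on f2 f1 (fst G1)"
  have xy: "x \<in> fst G1 \<union> fst G2" "y \<in> fst G1 \<union> fst G2" using assms(1,2) by (simp_all add: combG_def)
  note side = tagged_abstraction_combG_side[OF xy(1)] tagged_abstraction_combG_side[OF xy(2)]
  have wf: "snd G1' \<subseteq> fst G1' \<times> fst G1'" "snd G2' \<subseteq> fst G2' \<times> fst G2'"
    using tagged_abstractionD(2)[OF A1] tagged_abstractionD(2)[OF A2] by (simp_all add: wf_pexec_def)
  consider "(?F x, ?F y) \<in> snd G1'" | "(?F x, ?F y) \<in> snd G2'" | "b" "?F x \<in> fst G1'" "?F y \<in> fst G2'"
    using assms(3) by (auto simp: combG_def split: if_splits)
  then show ?thesis
  proof cases
    case 1
    then have "x \<in> fst G1" "y \<in> fst G1" using wf(1) side by blast+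
    then show ?thesis using 1 tagged_abstractionD(8)[OF A1] by (simp add: combG_def)
  next
    case 2
    then have "x \<in> fst G2" "y \<in> fst G2" "x \<notin> fst G1" "y \<notin> fst G1" using wf(2) side disjoint by blast+
    then show ?thesis using 2 tagged_abstractionD(8)[OF A2] by (simp add: combG_def)
  next
    case 3
    then show ?thesis using side by (simp add: combG_def)
  qed
qed

lemma tagged_abstraction_combG_fiber:
  assumes "e' \<in> fst (combG b G1' G2')" and "ev_method e' \<in> lib_M L"
  shows "((ev_output e', 0), restrictG (combG b G1 G2) {x \<in> fst (combG b G1 G2). override_on f2 f1 (fst G1) x = e'})
      \<in> sem (ev_thread e') (I (ev_thread e') (ev_method e') (ev_inputs e'))"
proof -
  let ?F = "override_on f2 f1 (fst G1)"
  have E: "fst (combG b G1 G2) = fst G1 \<union> fst G2" by (simp add: combG_def)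
  have wf: "snd G1 \<subseteq> fst G1 \<times> fst G1" "snd G2 \<subseteq> fst G2 \<times> fst G2"
    using tagged_abstractionD(1)[OF A1] tagged_abstractionD(1)[OF A2] by (simp_all add: wf_pexec_def)
  show ?thesis
  proof (cases "e' \<in> fst G1'")
    case True
    have "{x \<in> fst (combG b G1 G2). ?F x = e'} = {x \<in> fst G1. f1 x = e'}"
    proof (rule set_eqI)
      show "x \<in> {x \<in> fst (combG b G1 G2). ?F x = e'} \<longleftrightarrow> x \<in> {x \<in> fst G1. f1 x = e'}" for x
        using E tagged_abstraction_combG_side(1)[of x] True by auto
    qed
    moreover have "restrictG (combG b G1 G2) {x \<in> fst G1. f1 x = e'} = restrictG G1 {x \<in> fst G1. f1 x = e'}"
      using wf(2) disjoint by (intro restrictG_combG_left) auto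
    ultimately show ?thesis using tagged_abstractionD(9)[OF A1 True assms(2)] by simp
  next
    case False
    then have e': "e' \<in> fst G2'" using assms(1) by (simp add: combG_def)
    have "{x \<in> fst (combG b G1 G2). ?F x = e'} = {x \<in> fst G2. f2 x = e'}"
    proof (rule set_eqI)
      show "x \<in> {x \<in> fst (combG b G1 G2). ?F x = e'} \<longleftrightarrow> x \<in> {x \<in> fst G2. f2 x = e'}" for x
        using E tagged_abstraction_combG_side[of x] e' disjoint by auto
    qed
    moreover have "restrictG (combG b G1 G2) {x \<in> fst G2. f2 x = e'} = restrictG G2 {x \<in> fst G2. f2 x = e'}"
      using wf(1) disjoint by (intro restrictG_combG_right) auto
    ultimately show ?thesis using tagged_abstractionD(9)[OF A2 e' assms(2)] by simp
  qed
qed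

lemma tagged_abstraction_combG:
  "tagged_abstraction L I h (override_on f2 f1 (fst G1)) (combG b G1 G2) (combG b G1' G2')"
proof -
  let ?F = "override_on f2 f1 (fst G1)"
  note a1 = tagged_abstractionD[OF A1] and a2 = tagged_abstractionD[OF A2]
  have "?F ` fst G1 = f1 ` fst G1" by (simp cong: image_cong)
  moreover have "?F ` fst G2 = f2 ` fst G2"
    by (intro image_cong refl override_on_apply_notin) (use disjoint in blast)
  ultimately have "?F ` (fst G1 \<union> fst G2) = fst G1' \<union> fst G2'"
    using a1(3) a2(3) by (simp add: image_Un)
  moreover have "?F x = x" if "x \<in> fst G1 \<union> fst G2" "ev_method (?F x) \<notin> lib_M L" for x
    using that a1(5) a2(5) disjoint by (cases "x \<in> fst G1") auto
  moreover have "\<exists>y\<in>fst G1 \<union> fst G2. ?F y = ?F x \<and> fst (snd (?F x)) = h y"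
    if "x \<in> fst G1 \<union> fst G2" "ev_method (?F x) \<in> lib_M L" for x
  proof (cases "x \<in> fst G1")
    case True
    then show ?thesis using that(2) a1(6)[of x] by (metis UnI1 override_on_apply_in)
  next
    case False
    then show ?thesis using that a2(6)[of x] disjoint
      by (metis (no_types, lifting) Int_iff UnE UnI2 empty_iff override_on_apply_notin)
  qed
  moreover have "fst (combG b G1 G2) = fst G1 \<union> fst G2" "fst (combG b G1' G2') = fst G1' \<union> fst G2'"
    by (simp_all add: combG_def)
  ultimately show ?thesis
    unfolding tagged_abstraction_def wide_abstraction_def
    using a1(1,2,4) a2(1,2,4) tagged_abstraction_combG_po[of _ _ b]
      tagged_abstraction_combG_po_reflect[of _ b] tagged_abstraction_combG_fiber[of _ b]
    by (auto intro: wf_pexec_combG)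
qed

end

lemma tagged_abstraction_foldr_combG:
  assumes "list_all2 (\<lambda>G G'. \<exists>f. tagged_abstraction L I h f G G') Gs Gs'"
    and "disj_list Gs" and "inj_on h (\<Union>G\<in>set Gs. fst G)"
  shows "disj_list Gs' \<and>
    (\<exists>F. tagged_abstraction L I h F (foldr (combG b) Gs emptyG) (foldr (combG b) Gs' emptyG))"
  using assms
proof (induction rule: list_all2_induct)
  case Nil
  show ?case by (simp add: disj_list_def) (blast intro: tagged_abstraction_emptyG)
next
  case (Cons G Gs G' Gs')
  let ?H = "foldr (combG b) Gs emptyG" and ?H' = "foldr (combG b) Gs' emptyG"
  obtain f where f: "tagged_abstraction L I h f G G'" using Cons.hyps(1) by blast
  have disj: "fst G \<inter> fst ?H = {}" and "disj_list Gs"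
    using Cons.prems(1) by (auto simp: fst_foldr_combG)
  moreover have inj: "inj_on h (fst G \<union> fst ?H)"
    using Cons.prems(2) by (simp add: fst_foldr_combG)
  moreover have "inj_on h (\<Union>G\<in>set Gs. fst G)"
    using Cons.prems(2) by (rule inj_on_subset) auto
  ultimately obtain F where "disj_list Gs'" and F: "tagged_abstraction L I h F ?H ?H'"
    using Cons.IH by blast
  have "fst G' \<inter> fst ?H' = {}" by (rule tagged_abstraction_disjoint[OF f F disj inj])
  with \<open>disj_list Gs'\<close> have "disj_list (G' # Gs')" by (auto simp: fst_foldr_combG)
  then show ?case using tagged_abstraction_combG[OF f F disj inj] by auto
qed

lemma tagged_abstraction_foldr_combG_nth:
  assumes "\<forall>i<length Gs. \<exists>G'. (\<exists>f. tagged_abstraction L I h f (Gs!i) G') \<and> P i G'"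
    and "disj_list Gs" and "inj_on h (\<Union>G\<in>set Gs. fst G)"
  obtains Gs' F where "length Gs' = length Gs" and "\<forall>i<length Gs. P i (Gs'!i)" and "disj_list Gs'"
    and "tagged_abstraction L I h F (foldr (combG b) Gs emptyG) (foldr (combG b) Gs' emptyG)"
proof -
  from assms(1) obtain g
    where g: "\<forall>i<length Gs. (\<exists>f. tagged_abstraction L I h f (Gs!i) (g i)) \<and> P i (g i)"
    by metis
  let ?Gs' = "map g [0..<length Gs]"
  have "list_all2 (\<lambda>G G'. \<exists>f. tagged_abstraction L I h f G G') Gs ?Gs'"
    using g by (simp add: list_all2_conv_all_nth)
  then obtain F where "disj_list ?Gs'"
    and "tagged_abstraction L I h F (foldr (combG b) Gs emptyG) (foldr (combG b) ?Gs' emptyG)"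
    using tagged_abstraction_foldr_combG[where b = b] assms(2,3) by blast
  with g show ?thesis by (intro that[of ?Gs' F]) simp_all
qed

lemma tagged_abstraction_id:
  assumes "wf_pexec G" and "\<forall>e\<in>fst G. ev_method e \<notin> lib_M L"
  shows "tagged_abstraction L I h id G G"
  using assms by (auto simp: tagged_abstraction_def wide_abstraction_def)

lemma tagged_abstraction_call:
  assumes wd: "impl_well_defined T I L \<Lambda>" and t: "t \<in> {1..T}"
    and methods: "lib_methods \<Lambda> \<inter> lib_M L = {}" and m: "m \<in> lib_M L"
    and G: "(r, G) \<in> sem t (I t m vs)"
  shows "\<exists>G' f. (r, G') \<in> sem t (PCall m vs) \<and> tagged_abstraction L I h f G G'"
proof -
  have calls: "calls_only (lib_methods \<Lambda>) (I t m vs)"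
    and no_break: "\<And>v k G. ((v, Suc k), G) \<notin> sem t (I t m vs)"
    and nonempty: "\<And>v G. ((v, 0), G) \<in> sem t (I t m vs) \<Longrightarrow> fst G \<noteq> {}"
    using wd t m unfolding impl_well_defined_def by blast+
  obtain v where r: "r = (v, 0)" using G no_break by (metis old.nat.exhaust surj_pair)
  obtain x0 where x0: "x0 \<in> fst G" using G nonempty r by blast
  define e' where "e' = (t, h x0, (m, vs, v))"
  have e': "ev_method e' = m" "ev_thread e' = t" "ev_inputs e' = vs" "ev_output e' = v"
    by (simp_all add: e'_def ev_method_def ev_thread_def ev_inputs_def ev_output_def)
  have wf: "wf_pexec G" using G by (rule sem_wf_pexec)
  then have "restrictG G {x \<in> fst G. e' = e'} = G"
    by (cases G) (auto simp: restrictG_def wf_pexec_def)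
  moreover have "ev_method ` fst G \<subseteq> lib_methods \<Lambda>" using G calls by (rule sem_calls_only_methods)
  ultimately have "tagged_abstraction L I h (\<lambda>_. e') G ({e'}, {})"
    using wf x0 e' m methods G r
    by (auto simp: tagged_abstraction_def wide_abstraction_def wf_pexec_def e'_def)
  moreover have "(r, ({e'}, {})) \<in> sem t (PCall m vs)" by (auto simp: r e'_def)
  ultimately show ?thesis by blast
qed

lemma tagged_abstraction_PLet:
  assumes IH1: "\<And>r G. (r, G) \<in> sem t q \<Longrightarrow> inj_on h (fst G) \<Longrightarrow>
      \<exists>G' f. (r, G') \<in> sem t p \<and> tagged_abstraction L I h f G G'"
    and IH2: "\<And>v r G. (r, G) \<in> sem t (g v) \<Longrightarrow> inj_on h (fst G) \<Longrightarrow>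
      \<exists>G' f'. (r, G') \<in> sem t (f v) \<and> tagged_abstraction L I h f' G G'"
    and G: "(r, G) \<in> sem t (PLet q g)" and inj: "inj_on h (fst G)"
  shows "\<exists>G' f'. (r, G') \<in> sem t (PLet p f) \<and> tagged_abstraction L I h f' G G'"
  using G
proof (cases rule: sem_PLetE)
  case (seq v G1 G2)
  have inj12: "inj_on h (fst G1 \<union> fst G2)" using inj seq(3) by (simp add: seqG_def)
  obtain G1' f1 where G1': "((v, 0), G1') \<in> sem t p" "tagged_abstraction L I h f1 G1 G1'"
    using IH1[OF seq(1)] inj12 by (blast intro: inj_on_subset)
  obtain G2' f2 where G2': "(r, G2') \<in> sem t (f v)" "tagged_abstraction L I h f2 G2 G2'"
    using IH2[OF seq(2)] inj12 by (blast intro: inj_on_subset)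
  have "fst G1' \<inter> fst G2' = {}"
    by (rule tagged_abstraction_disjoint[OF G1'(2) G2'(2) seq(4) inj12])
  then have "(r, seqG G1' G2') \<in> sem t (PLet p f)" using G1'(1) G2'(1) by (intro sem_PLet_seqI)
  moreover have "tagged_abstraction L I h (override_on f2 f1 (fst G1)) G (seqG G1' G2')"
    using tagged_abstraction_combG[OF G1'(2) G2'(2) seq(4) inj12] seq(3) by (simp add: seqG_eq_combG)
  ultimately show ?thesis by blast
next
  case break
  then show ?thesis using IH1 inj by (blast intro: sem_PLet_breakI)
qed

lemma tagged_abstraction_iterations:
  assumes IH: "\<And>r G. (r, G) \<in> sem t q \<Longrightarrow> inj_on h (fst G) \<Longrightarrow>
      \<exists>G' f. (r, G') \<in> sem t p \<and> tagged_abstraction L I h f G G'"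
    and "Gs \<noteq> []" and body: "\<forall>i < length Gs - 1. \<exists>u. ((u, 0), Gs!i) \<in> sem t q"
    and exit: "((v, Suc k), last Gs) \<in> sem t q" and inj: "inj_on h (\<Union>G\<in>set Gs. fst G)"
  shows "\<forall>i<length Gs. \<exists>G'. (\<exists>f. tagged_abstraction L I h f (Gs!i) G') \<and>
    (i < length Gs - 1 \<longrightarrow> (\<exists>u. ((u, 0), G') \<in> sem t p)) \<and>
    (i = length Gs - 1 \<longrightarrow> ((v, Suc k), G') \<in> sem t p)"
proof (intro allI impI)
  fix i assume "i < length Gs"
  then have "Gs!i \<in> set Gs" by simp
  with inj have inj_i: "inj_on h (fst (Gs!i))" by (blast intro: inj_on_subset)
  show "\<exists>G'. (\<exists>f. tagged_abstraction L I h f (Gs!i) G') \<and>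
    (i < length Gs - 1 \<longrightarrow> (\<exists>u. ((u, 0), G') \<in> sem t p)) \<and>
    (i = length Gs - 1 \<longrightarrow> ((v, Suc k), G') \<in> sem t p)"
  proof (cases "i < length Gs - 1")
    case True
    then obtain u where "((u, 0), Gs!i) \<in> sem t q" using body by blast
    then show ?thesis using IH inj_i True by fastforce
  next
    case False
    with \<open>i < length Gs\<close> have "i = length Gs - 1" by simp
    with \<open>Gs \<noteq> []\<close> have "Gs!i = last Gs" by (simp add: last_conv_nth)
    then show ?thesis using IH exit inj_i \<open>i = length Gs - 1\<close> by fastforce
  qed
qed

lemma tagged_abstraction_PLoop:
  assumes IH: "\<And>r G. (r, G) \<in> sem t q \<Longrightarrow> inj_on h (fst G) \<Longrightarrow>
      \<exists>G' f. (r, G') \<in> sem t p \<and> tagged_abstraction L I h f G G'"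
    and "(r, G) \<in> sem t (PLoop q)" and "inj_on h (fst G)"
  shows "\<exists>G' f. (r, G') \<in> sem t (PLoop p) \<and> tagged_abstraction L I h f G G'"
proof -
  from assms(2) obtain v k Gs where r: "r = (v, k)" and G: "G = seq_list Gs"
    and "Gs \<noteq> []" and "disj_list Gs"
    and body: "\<forall>i < length Gs - 1. \<exists>u. ((u, 0), Gs!i) \<in> sem t q"
    and exit: "((v, Suc k), last Gs) \<in> sem t q"
    by auto
  let ?n = "length Gs"
  have inj: "inj_on h (\<Union>G\<in>set Gs. fst G)" using assms(3) G by (simp add: fst_seq_list)
  obtain Gs' F where "length Gs' = ?n"
    and Gs': "\<forall>i<?n. (i < ?n - 1 \<longrightarrow> (\<exists>u. ((u, 0), Gs'!i) \<in> sem t p)) \<and>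
                     (i = ?n - 1 \<longrightarrow> ((v, Suc k), Gs'!i) \<in> sem t p)"
    and "disj_list Gs'"
    and F: "tagged_abstraction L I h F (foldr (combG True) Gs emptyG) (foldr (combG True) Gs' emptyG)"
    by (rule tagged_abstraction_foldr_combG_nth[OF
          tagged_abstraction_iterations[OF IH \<open>Gs \<noteq> []\<close> body exit inj] \<open>disj_list Gs\<close> inj])
  have "(r, seq_list Gs') \<in> sem t (PLoop p)"
    unfolding r
  proof (rule sem_PLoopI)
    show "Gs' \<noteq> []" using \<open>length Gs' = ?n\<close> \<open>Gs \<noteq> []\<close> by auto
    then show "((v, Suc k), last Gs') \<in> sem t p"
      using Gs'[rule_format, of "?n - 1"] \<open>length Gs' = ?n\<close> \<open>Gs \<noteq> []\<close> by (simp add: last_conv_nth)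
    show "\<forall>i < length Gs' - 1. \<exists>u. ((u, 0), Gs'!i) \<in> sem t p"
      using Gs' \<open>length Gs' = ?n\<close> by simp
  qed fact
  moreover have "tagged_abstraction L I h F G (seq_list Gs')"
    using F G by (simp add: seq_list_def seqG_eq_combG)
  ultimately show ?thesis by blast
qed

lemma translate_sem_tagged_abstraction:
  assumes wd: "impl_well_defined T I L \<Lambda>" and t: "t \<in> {1..T}"
    and methods: "lib_methods \<Lambda> \<inter> lib_M L = {}"
  shows "(r, G) \<in> sem t (translate I (lib_M L) t p) \<Longrightarrow> inj_on h (fst G) \<Longrightarrow>
    \<exists>G' f. (r, G') \<in> sem t p \<and> tagged_abstraction L I h f G G'"
proof (induction p arbitrary: r G)
  case (PCall m vs)
  show ?case
  proof (cases "m \<in> lib_M L")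
    case True
    then show ?thesis using PCall.prems(1) tagged_abstraction_call[OF wd t methods] by simp
  next
    case False
    then have "(r, G) \<in> sem t (PCall m vs)" using PCall.prems(1) by simp
    moreover have "tagged_abstraction L I h id G G"
      using sem_wf_pexec[OF calculation] calculation False
      by (intro tagged_abstraction_id) (auto simp: ev_method_def)
    ultimately show ?thesis by blast
  qed
next
  case (PLet p f)
  then show ?case by (intro tagged_abstraction_PLet[OF PLet.IH(1) PLet.IH(2)[OF rangeI]]) simp_all
next
  case (PLoop p)
  then show ?case by (intro tagged_abstraction_PLoop[OF PLoop.IH]) simp_all
qed (use tagged_abstraction_emptyG in fastforce)+

lemma conc_sem_finite: "(vs, G) \<in> conc_sem ps \<Longrightarrow> finite (fst G)"
proof -
  assume "(vs, G) \<in> conc_sem ps"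
  then obtain Gs where G: "G = par_list Gs" and "\<forall>i<length Gs. ((vs!i, 0), Gs!i) \<in> sem (Suc i) (ps!i)"
    unfolding conc_sem_def by auto
  then have "\<forall>Gi\<in>set Gs. wf_pexec Gi" by (metis in_set_conv_nth sem_wf_pexec)
  then show "finite (fst G)" by (auto simp: G fst_par_list wf_pexec_def)
qed

lemma conc_sem_tagged_abstraction:
  assumes wd: "impl_well_defined T I L \<Lambda>" and methods: "lib_methods \<Lambda> \<inter> lib_M L = {}"
    and "length ps = T" and "(vs, G) \<in> conc_sem (translate_conc I (lib_M L) ps)"
    and inj: "inj_on h (fst G)"
  shows "\<exists>G' F. (vs, G') \<in> conc_sem ps \<and> tagged_abstraction L I h F G G'"
proof -
  obtain Gs where G: "G = par_list Gs" and "length vs = T" "length Gs = T" "disj_list Gs"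
    and threads: "\<forall>i<T. ((vs!i, 0), Gs!i) \<in> sem (Suc i) (translate I (lib_M L) (Suc i) (ps!i))"
    using assms(3,4) unfolding conc_sem_def translate_conc_def by auto
  have "\<forall>i<length Gs. \<exists>G'. (\<exists>f. tagged_abstraction L I h f (Gs!i) G') \<and> ((vs!i, 0), G') \<in> sem (Suc i) (ps!i)"
  proof (intro allI impI)
    fix i assume "i < length Gs"
    then have "Gs!i \<in> set Gs" by simp
    then have "fst (Gs!i) \<subseteq> fst G" by (auto simp: G fst_par_list)
    moreover have "Suc i \<in> {1..T}" using \<open>i < length Gs\<close> \<open>length Gs = T\<close> by simp
    ultimately show "\<exists>G'. (\<exists>f. tagged_abstraction L I h f (Gs!i) G') \<and> ((vs!i, 0), G') \<in> sem (Suc i) (ps!i)"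
      using translate_sem_tagged_abstraction[OF wd _ methods] threads \<open>i < length Gs\<close> \<open>length Gs = T\<close>
        inj_on_subset[OF inj] by blast
  qed
  moreover have "inj_on h (\<Union>G\<in>set Gs. fst G)" using inj by (simp add: G fst_par_list)
  ultimately obtain Gs' F where "length Gs' = length Gs"
    and Gs': "\<forall>i<length Gs. ((vs!i, 0), Gs'!i) \<in> sem (Suc i) (ps!i)" and "disj_list Gs'"
    and F: "tagged_abstraction L I h F (foldr (combG False) Gs emptyG) (foldr (combG False) Gs' emptyG)"
    by (rule tagged_abstraction_foldr_combG_nth[OF _ \<open>disj_list Gs\<close>])
  then have "(vs, par_list Gs') \<in> conc_sem ps"
    using Gs' \<open>length Gs = T\<close> \<open>length vs = T\<close> assms(3) unfolding conc_sem_def by auto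
  moreover have "tagged_abstraction L I h F G (par_list Gs')"
    using F by (simp add: G par_list_def parG_eq_combG)
  ultimately show ?thesis by blast
qed

theorem mainTheorem1:
  fixes T :: nat and Loc :: "'v set" and to :: "('s \<times> 's) set"
    and L :: "('v,'m,'s) library" and \<Lambda> :: "('v,'m,'s) library set"
    and I :: "('v,'m) impl" and ps :: "('v,'m) prog list"
    and vs :: "'v list" and G :: "('v,'m) pexec"
  assumes "is_library T Loc to L"
    and "\<forall>L'\<in>\<Lambda>. is_library T Loc to L'"
    and "\<forall>L1\<in>\<Lambda> \<union> {L}. \<forall>L2\<in>\<Lambda> \<union> {L}. L1 \<noteq> L2 \<longrightarrow> compatible L1 L2"
    and "L \<notin> \<Lambda>"
    and "impl_well_defined T I L \<Lambda>"
    and "length ps = T"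
    and "\<forall>p\<in>set ps. valid_prog p \<and> calls_only (lib_methods (\<Lambda> \<union> {L})) p"
    and "(vs, G) \<in> conc_sem (translate_conc I (lib_M L) ps)"
  shows "\<exists>G' f. (vs, G') \<in> conc_sem ps \<and> wide_abstraction L I f G G'"
proof -
  have methods: "lib_methods \<Lambda> \<inter> lib_M L = {}"
    using assms(3,4) by (fastforce simp: lib_methods_def compatible_def)
  obtain h :: "('v,'m) event \<Rightarrow> nat" where "inj_on h (fst G)"
    using conc_sem_finite[OF assms(8)] finite_imp_inj_to_nat_seg by blast
  then obtain G' F where "(vs, G') \<in> conc_sem ps" and "tagged_abstraction L I h F G G'"
    using conc_sem_tagged_abstraction[OF assms(5) methods assms(6,8)] by blast
  then show ?thesis unfolding tagged_abstraction_def by blast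
qed

end
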